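(* Let $m\ge3$ and let $M_1,\ldots,M_m$ be mutually disjoint connected open subsets of $\mathbb{S}^2$ such that \[\partial_{\mathrm{top}}M_1=\cdots=\partial_{\mathrm{top}}M_m=\bigcap_{i=1}^m\overline{M_i}.\] Then none of the domains $M_1,\ldots,M_m$ is a John domain.
   Context: $\partial_{\mathrm{top}}E$ denotes topological boundary and $\overline{E}$ closure. $\mathbb{S}^2$ carries its standard metric. An open connected proper subset $D$ of $\mathbb{S}^2$ is a John domain if there is $C\ge1$ such that any $a,b\in D$ can be joined by a rectifiable curve $\gamma\subset D$ with $\min\{s(\gamma(a,x)),s(\gamma(b,x))\}\le C\,\mathrm{dist}(x,\mathbb{S}^2\setminus D)$ for all $x\in\gamma$, where $\gamma(a,x),\gamma(b,x)$ are the subarcs of $\gamma$ from $a$, resp. $b$, to $x$ and $s$ denotes length. *)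

theory Defs
  imports "HOL-Analysis.Analysis"
begin

definition S2 :: "(real^3) set" where
  "S2 = sphere 0 1"

definition sdist :: "real^3 \<Rightarrow> real^3 \<Rightarrow> real" where
  "sdist x y = arccos (x \<bullet> y)"

definition sdist_set :: "real^3 \<Rightarrow> (real^3) set \<Rightarrow> real" where
  "sdist_set x A = Inf (sdist x ` A)"

definition partition_sums :: "(real \<Rightarrow> real^3) \<Rightarrow> real \<Rightarrow> real \<Rightarrow> real set" where
  "partition_sums g s t =
     {(\<Sum>i<n. sdist (g (p i)) (g (p (Suc i)))) | p n.
        p 0 = s \<and> p n = t \<and> (\<forall>i<n. p i \<le> p (Suc i))}"

definition curve_length :: "(real \<Rightarrow> real^3) \<Rightarrow> real \<Rightarrow> real \<Rightarrow> real" where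
  "curve_length g s t = Sup (partition_sums g s t)"

definition rectifiable_curve :: "(real \<Rightarrow> real^3) \<Rightarrow> bool" where
  "rectifiable_curve g \<longleftrightarrow> bdd_above (partition_sums g 0 1)"

definition john_domain :: "(real^3) set \<Rightarrow> bool" where
  "john_domain D \<longleftrightarrow>
     openin (top_of_set S2) D \<and> connected D \<and> D \<subset> S2 \<and>
     (\<exists>C\<ge>1. \<forall>a\<in>D. \<forall>b\<in>D. \<exists>g. path g \<and> rectifiable_curve g \<and>
        g ` {0..1} \<subseteq> D \<and> g 0 = a \<and> g 1 = b \<and>
        (\<forall>t\<in>{0..1}. min (curve_length g 0 t) (curve_length g t 1)
                       \<le> C * sdist_set (g t) (S2 - D)))"

end

theory Submission
  imports Defs
begin

text \<open>Every frontier point \<open>y\<close> of a John domain is accessible: John curves from points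
  \<open>a\<^sub>n \<rightarrow> y\<close> to a fixed centre leave small balls around \<open>a\<^sub>n\<close> at points deep inside the
  domain, and short great-circle arcs between such exit points, chosen diagonally, chain into a
  path ending at \<open>y\<close>. Any open subset of the sphere also has accessible frontier points close to
  any given one (nearest points of the complement). So if \<open>M\<^sub>1\<close> were a John domain, two frontier
  points would be accessible from both \<open>M\<^sub>1\<close> and \<open>M\<^sub>2\<close>, and arcs through \<open>M\<^sub>1\<close> and \<open>M\<^sub>2\<close>
  joining them would form a Jordan curve. The side of that curve not containing a chosen point of
  \<open>M\<^sub>3\<close> meets \<open>M\<^sub>1\<close> and \<open>M\<^sub>2\<close>, hence their common frontier, hence \<open>M\<^sub>3\<close>; since \<open>M\<^sub>3\<close>
  misses the curve, it would be disconnected.\<close>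

lemma arg_le_two_sin:
  fixes u :: real
  assumes "0 \<le> u" "u \<le> pi/2"
  shows "u \<le> 2 * sin u"
proof (cases "u \<le> pi/3")
  case True
  show ?thesis
  proof (cases "u = 0")
    case False
    then have "0 < u" using assms by simp
    obtain z where z: "0 < z" "z < u" "sin u - sin 0 = (u - 0) * cos z"
      using MVT2[of 0 u sin cos] \<open>0 < u\<close> by (auto intro: DERIV_sin)
    have "cos (pi/3) \<le> cos z"
      using z True by (intro cos_monotone_0_pi_le) auto
    then have "u * (1/2) \<le> u * cos z"
      using \<open>0 < u\<close> by (intro mult_left_mono) (auto simp: cos_60)
    then show ?thesis using z by simp
  qed simp
next
  case False
  have "sin (pi/3) \<le> sin u"
    using False assms by (intro sin_monotone_2pi_le) auto
  then have "sqrt 3 / 2 \<le> sin u" by (simp add: sin_60)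
  moreover have "pi/2 \<le> sqrt 3"
  proof (rule real_le_rsqrt)
    have "pi/2 \<le> 1.6" using pi_approx by simp
    then have "(pi/2)\<^sup>2 \<le> 1.6\<^sup>2" by (intro power_mono) auto
    then show "(pi/2)\<^sup>2 \<le> 3" by (simp add: power2_eq_square)
  qed
  ultimately show ?thesis using assms by linarith
qed

lemma dist_unit_sq:
  fixes x y :: "'a::real_inner"
  assumes "norm x = 1" "norm y = 1"
  shows "(dist x y)\<^sup>2 = 2 - 2 * (x \<bullet> y)"
proof -
  have "(dist x y)\<^sup>2 = x \<bullet> x - 2 * (x \<bullet> y) + y \<bullet> y"
    by (simp add: dist_norm power2_norm_eq_inner inner_diff_left inner_diff_right inner_commute)
  then show ?thesis
    using assms by (simp flip: power2_norm_eq_inner)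
qed

lemma S2_norm: "x \<in> S2 \<Longrightarrow> norm x = 1"
  by (simp add: S2_def)

lemma sdist_angle:
  assumes "x \<in> S2" "y \<in> S2"
  shows "0 \<le> sdist x y" "sdist x y \<le> pi" "cos (sdist x y) = x \<bullet> y"
proof -
  have "\<bar>x \<bullet> y\<bar> \<le> 1"
    using Cauchy_Schwarz_ineq2[of x y] assms by (simp add: S2_norm)
  then show "0 \<le> sdist x y" "sdist x y \<le> pi" "cos (sdist x y) = x \<bullet> y"
    by (auto simp: sdist_def arccos_lbound arccos_ubound)
qed

text \<open>The chord subtending the angle \<open>\<theta>\<close> has length \<open>2 sin (\<theta>/2)\<close>.\<close>
lemma dist_le_sdist_le_two_dist:
  assumes "x \<in> S2" "y \<in> S2"
  shows "dist x y \<le> sdist x y" "sdist x y \<le> 2 * dist x y"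
proof -
  define th where "th = sdist x y"
  note th = sdist_angle[OF assms, folded th_def]
  have "(dist x y)\<^sup>2 = 2 - 2 * cos th"
    using dist_unit_sq[of x y] assms th(3) by (simp add: S2_norm)
  also have "\<dots> = (2 * sin (th/2))\<^sup>2"
    using cos_double_sin[of "th/2"] by (simp add: power_mult_distrib)
  finally have "dist x y = 2 * sin (th/2)"
    by (rule power2_eq_imp_eq) (use th in \<open>auto intro!: sin_ge_zero\<close>)
  then show "dist x y \<le> sdist x y" "sdist x y \<le> 2 * dist x y"
    using sin_x_le_x[of "th/2"] arg_le_two_sin[of "th/2"] th by (simp_all add: th_def)
qed

lemma sdist_set_le_two_infdist:
  assumes "x \<in> S2" "A \<subseteq> S2" "A \<noteq> {}"
  shows "sdist_set x A \<le> 2 * infdist x A"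
proof -
  have "sdist_set x A \<le> 2 * dist x a" if "a \<in> A" for a
  proof -
    have "sdist_set x A \<le> sdist x a"
      unfolding sdist_set_def using that assms sdist_angle(1)[OF assms(1)]
      by (intro cInf_lower bdd_belowI[of _ 0]) auto
    also have "\<dots> \<le> 2 * dist x a"
      using dist_le_sdist_le_two_dist(2)[OF assms(1)] that assms(2) by blast
    finally show ?thesis .
  qed
  then have "sdist_set x A / 2 \<le> (INF a\<in>A. dist x a)"
    using assms(3) by (intro cINF_greatest) force+
  then show ?thesis
    using assms(3) by (simp add: infdist_def)
qed

lemma partition_sums_singleton:
  "s \<le> t \<Longrightarrow> sdist (g s) (g t) \<in> partition_sums g s t"
  unfolding partition_sums_def
  by (rule CollectI, rule exI[of _ "\<lambda>i. if i = 0 then s else t"], rule exI[of _ 1]) auto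

lemma partition_sums_append:
  assumes "a \<in> partition_sums g r s" "b \<in> partition_sums g s t"
  shows "a + b \<in> partition_sums g r t"
proof -
  obtain p n where a: "a = (\<Sum>i<n. sdist (g (p i)) (g (p (Suc i))))"
    and p: "p 0 = r" "p n = s" "\<forall>i<n. p i \<le> p (Suc i)"
    using assms(1) unfolding partition_sums_def by blast
  obtain q k where b: "b = (\<Sum>i<k. sdist (g (q i)) (g (q (Suc i))))"
    and q: "q 0 = s" "q k = t" "\<forall>i<k. q i \<le> q (Suc i)"
    using assms(2) unfolding partition_sums_def by blast
  define pq where "pq i = (if i \<le> n then p i else q (i - n))" for i
  let ?f = "\<lambda>i. sdist (g (pq i)) (g (pq (Suc i)))"
  have "(\<Sum>i<n + k. ?f i) = (\<Sum>i\<in>{0..<n}. ?f i) + (\<Sum>i\<in>{n..<n + k}. ?f i)"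
    unfolding atLeast0LessThan[symmetric] by (rule sum.atLeastLessThan_concat[symmetric]) auto
  also have "(\<Sum>i\<in>{0..<n}. ?f i) = a"
    unfolding a atLeast0LessThan by (rule sum.cong) (auto simp: pq_def)
  also have "(\<Sum>i\<in>{n..<n + k}. ?f i) = (\<Sum>i<k. ?f (i + n))"
    using sum.shift_bounds_nat_ivl[of ?f 0 n k] by (simp add: atLeast0LessThan add.commute)
  also have "\<dots> = b"
    unfolding b using p(2) q(1) by (intro sum.cong) (auto simp: pq_def Suc_diff_le)
  finally have "(\<Sum>i<n + k. ?f i) = a + b" .
  moreover have "pq i \<le> pq (Suc i)" if "i < n + k" for i
  proof (cases "i < n")
    case False
    then have "pq i = q (i - n)" "pq (Suc i) = q (Suc (i - n))" "i - n < k"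
      using that p(2) q(1) by (auto simp: pq_def Suc_diff_le)
    then show ?thesis
      using q(3) by simp
  qed (use p(3) in \<open>simp add: pq_def\<close>)
  moreover have "pq 0 = r" "pq (n + k) = t"
    using p q by (auto simp: pq_def)
  ultimately show ?thesis
    unfolding partition_sums_def by (intro CollectI exI[of _ pq] exI[of _ "n + k"]) auto
qed

lemma sdist_le_curve_length:
  assumes "rectifiable_curve g" "g ` {0..1} \<subseteq> S2" "0 \<le> s" "s \<le> t" "t \<le> 1"
  shows "sdist (g s) (g t) \<le> curve_length g s t"
proof -
  obtain B where B: "\<And>x. x \<in> partition_sums g 0 1 \<Longrightarrow> x \<le> B"
    using assms(1) unfolding rectifiable_curve_def bdd_above_def by blast
  have "x \<le> B" if x: "x \<in> partition_sums g s t" for x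
  proof -
    have "sdist (g 0) (g s) + x \<in> partition_sums g 0 t"
      by (rule partition_sums_append[OF partition_sums_singleton[OF assms(3)] x])
    then have "sdist (g 0) (g s) + x + sdist (g t) (g 1) \<in> partition_sums g 0 1"
      by (rule partition_sums_append[OF _ partition_sums_singleton[OF assms(5)]])
    moreover have "0 \<le> sdist (g 0) (g s)" "0 \<le> sdist (g t) (g 1)"
      using assms by (auto intro!: sdist_angle(1))
    ultimately show ?thesis
      using B by fastforce
  qed
  then have "bdd_above (partition_sums g s t)"
    by (rule bdd_aboveI)
  then show ?thesis
    unfolding curve_length_def by (rule cSup_upper[OF partition_sums_singleton[OF assms(4)]])
qed

definition chordal_john :: "real \<Rightarrow> (real^3) set \<Rightarrow> bool" where
  "chordal_john C D \<longleftrightarrow>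
     (\<forall>a\<in>D. \<forall>b\<in>D. \<exists>g. path g \<and> g ` {0..1} \<subseteq> D \<and> g 0 = a \<and> g 1 = b \<and>
        (\<forall>t\<in>{0..1}. min (dist (g t) a) (dist (g t) b) \<le> C * infdist (g t) (S2 - D)))"

text \<open>Arc length dominates the chord, and the spherical distance to the complement is at most
  twice the chordal one.\<close>
lemma john_domain_imp_chordal_john:
  assumes "john_domain D"
  obtains C where "C \<ge> 1" "chordal_john C D"
proof -
  from assms obtain C where C: "C \<ge> 1" and DS: "D \<subset> S2" and
    J: "\<And>a b. a \<in> D \<Longrightarrow> b \<in> D \<Longrightarrow> \<exists>g. path g \<and> rectifiable_curve g \<and>
        g ` {0..1} \<subseteq> D \<and> g 0 = a \<and> g 1 = b \<and>
        (\<forall>t\<in>{0..1}. min (curve_length g 0 t) (curve_length g t 1) \<le> C * sdist_set (g t) (S2 - D))"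
    unfolding john_domain_def by blast
  have "chordal_john (2 * C) D"
    unfolding chordal_john_def
  proof (intro ballI)
    fix a b assume "a \<in> D" "b \<in> D"
    then obtain g where g: "path g" "rectifiable_curve g" "g ` {0..1} \<subseteq> D" "g 0 = a" "g 1 = b"
      and cone: "\<And>t. t \<in> {0..1} \<Longrightarrow>
                   min (curve_length g 0 t) (curve_length g t 1) \<le> C * sdist_set (g t) (S2 - D)"
      using J by blast
    have gS: "g ` {0..1} \<subseteq> S2" and "S2 - D \<noteq> {}"
      using g(3) DS by blast+
    have "min (dist (g t) a) (dist (g t) b) \<le> 2 * C * infdist (g t) (S2 - D)" if t: "t \<in> {0..1}" for t
    proof -
      have "g 0 \<in> S2" "g t \<in> S2" "g 1 \<in> S2"
        using gS t by auto
      have "dist (g t) a \<le> curve_length g 0 t"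
        using dist_le_sdist_le_two_dist(1)[of "g 0" "g t"] sdist_le_curve_length[OF g(2) gS, of 0 t]
          \<open>g 0 \<in> S2\<close> \<open>g t \<in> S2\<close> t g(4) by (simp add: dist_commute)
      moreover have "dist (g t) b \<le> curve_length g t 1"
        using dist_le_sdist_le_two_dist(1)[of "g t" "g 1"] sdist_le_curve_length[OF g(2) gS, of t 1]
          \<open>g 1 \<in> S2\<close> \<open>g t \<in> S2\<close> t g(5) by simp
      ultimately have "min (dist (g t) a) (dist (g t) b) \<le> C * sdist_set (g t) (S2 - D)"
        using cone[OF t] by linarith
      also have "\<dots> \<le> C * (2 * infdist (g t) (S2 - D))"
        using sdist_set_le_two_infdist[OF \<open>g t \<in> S2\<close> _ \<open>S2 - D \<noteq> {}\<close>] C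
        by (intro mult_left_mono) auto
      finally show ?thesis by simp
    qed
    then show "\<exists>g. path g \<and> g ` {0..1} \<subseteq> D \<and> g 0 = a \<and> g 1 = b \<and>
        (\<forall>t\<in>{0..1}. min (dist (g t) a) (dist (g t) b) \<le> 2 * C * infdist (g t) (S2 - D))"
      using g by blast
  qed
  then show ?thesis
    using that[of "2 * C"] C by simp
qed

definition sphere_segment :: "'a::real_normed_vector \<Rightarrow> 'a \<Rightarrow> real \<Rightarrow> 'a" where
  "sphere_segment P Q t = ((1 - t) *\<^sub>R P + t *\<^sub>R Q) /\<^sub>R norm ((1 - t) *\<^sub>R P + t *\<^sub>R Q)"

lemma sphere_segment_inner:
  fixes P Q :: "'a::real_inner"
  assumes P: "norm P = 1" and Q: "norm Q = 1" and c: "0 \<le> P \<bullet> Q" and t: "0 \<le> t" "t \<le> 1"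
  shows "norm (sphere_segment P Q t) = 1"
    and "P \<bullet> Q \<le> P \<bullet> sphere_segment P Q t"
    and "t < 1 \<Longrightarrow> P \<bullet> Q < 1 \<Longrightarrow> P \<bullet> Q < P \<bullet> sphere_segment P Q t"
proof -
  define c where "c = P \<bullet> Q"
  define v where "v = (1 - t) *\<^sub>R P + t *\<^sub>R Q"
  have c1: "c \<le> 1"
    using Cauchy_Schwarz_ineq2[of P Q] P Q by (simp add: c_def)
  have PP: "P \<bullet> P = 1" "Q \<bullet> Q = 1"
    using P Q by (simp_all flip: power2_norm_eq_inner)
  have vP: "v \<bullet> P = (1 - t) + t * c"
    by (simp add: v_def inner_add_left PP c_def inner_commute[of Q P])
  have "v \<bullet> v = (1 - t)\<^sup>2 + t\<^sup>2 + 2 * t * (1 - t) * c"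
    by (simp add: v_def inner_add_left inner_add_right PP c_def inner_commute power2_eq_square
        algebra_simps)
  then have nv: "(norm v)\<^sup>2 = (1 - t)\<^sup>2 + t\<^sup>2 + 2 * t * (1 - t) * c"
    by (simp add: power2_norm_eq_inner)
  have "0 < (1 - t)\<^sup>2 + t\<^sup>2"
    by (cases "t = 1") (auto intro!: add_pos_nonneg)
  moreover have "0 \<le> 2 * t * (1 - t) * c"
    using t c by (simp add: c_def)
  ultimately have "0 < (norm v)\<^sup>2"
    unfolding nv by linarith
  then have "v \<noteq> 0"
    by auto
  then show "norm (sphere_segment P Q t) = 1"
    by (simp add: sphere_segment_def v_def)
  have w: "P \<bullet> sphere_segment P Q t = (v \<bullet> P) / norm v"
    by (simp add: sphere_segment_def v_def inner_commute divide_inverse_commute)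
  text \<open>Squaring turns the claim \<open>c \<le> (v \<bullet> P) / norm v\<close> into a polynomial inequality.\<close>
  have gap: "(v \<bullet> P)\<^sup>2 - (c * norm v)\<^sup>2 = (1 - t) * (1 - c\<^sup>2) * ((1 - t) + 2 * t * c)"
    unfolding power_mult_distrib vP nv by (simp add: power2_eq_square algebra_simps)
  have vP_nonneg: "0 \<le> v \<bullet> P"
    using vP t c by (simp add: c_def)
  have "0 \<le> 1 - c\<^sup>2"
    using c c1 by (simp add: c_def abs_square_le_1)
  then have "0 \<le> (1 - t) * (1 - c\<^sup>2) * ((1 - t) + 2 * t * c)"
    using t c by (simp add: c_def)
  then have "(c * norm v)\<^sup>2 \<le> (v \<bullet> P)\<^sup>2"
    using gap by linarith
  then have "c * norm v \<le> v \<bullet> P"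
    using vP_nonneg by (rule power2_le_imp_le)
  then show "P \<bullet> Q \<le> P \<bullet> sphere_segment P Q t"
    using \<open>v \<noteq> 0\<close> by (simp add: w c_def pos_le_divide_eq)
  assume "t < 1" "P \<bullet> Q < 1"
  then have "0 < (1 - t) * (1 - c\<^sup>2) * ((1 - t) + 2 * t * c)"
    using t c by (simp add: c_def abs_square_less_1 add_pos_nonneg)
  then have "(c * norm v)\<^sup>2 < (v \<bullet> P)\<^sup>2"
    using gap by linarith
  then have "c * norm v < v \<bullet> P"
    using vP_nonneg by (rule power2_less_imp_less)
  then show "P \<bullet> Q < P \<bullet> sphere_segment P Q t"
    using \<open>v \<noteq> 0\<close> by (simp add: w c_def pos_less_divide_eq)
qed

lemma sphere_segment_closer:
  fixes P Q :: "'a::real_inner"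
  assumes P: "norm P = 1" and Q: "norm Q = 1" and PQ: "dist P Q < 1" and t: "0 \<le> t" "t \<le> 1"
  shows "norm (sphere_segment P Q t) = 1"
    and "dist P (sphere_segment P Q t) \<le> dist P Q"
    and "t < 1 \<Longrightarrow> P \<noteq> Q \<Longrightarrow> dist P (sphere_segment P Q t) < dist P Q"
proof -
  have dPQ: "(dist P Q)\<^sup>2 = 2 - 2 * (P \<bullet> Q)"
    by (rule dist_unit_sq[OF P Q])
  moreover have "(dist P Q)\<^sup>2 < 1"
    using PQ by (simp add: power_less_one_iff)
  ultimately have c: "0 \<le> P \<bullet> Q"
    by simp
  note inner = sphere_segment_inner[OF P Q c t]
  show "norm (sphere_segment P Q t) = 1"
    by (rule inner(1))
  have dw: "(dist P (sphere_segment P Q t))\<^sup>2 = 2 - 2 * (P \<bullet> sphere_segment P Q t)"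
    by (rule dist_unit_sq[OF P inner(1)])
  have "(dist P (sphere_segment P Q t))\<^sup>2 \<le> (dist P Q)\<^sup>2"
    using dw dPQ inner(2) by linarith
  then show "dist P (sphere_segment P Q t) \<le> dist P Q"
    by (rule power2_le_imp_le) simp
  assume "t < 1" "P \<noteq> Q"
  then have "P \<bullet> Q < 1"
    using dPQ Cauchy_Schwarz_ineq2[of P Q] P Q by (cases "P \<bullet> Q = 1") auto
  then have "(dist P (sphere_segment P Q t))\<^sup>2 < (dist P Q)\<^sup>2"
    using dw dPQ inner(3)[OF \<open>t < 1\<close>] by linarith
  then show "dist P (sphere_segment P Q t) < dist P Q"
    by (rule power2_less_imp_less) simp
qed

lemma path_sphere_segment:
  fixes P Q :: "'a::real_inner"
  assumes P: "norm P = 1" and Q: "norm Q = 1" and PQ: "dist P Q < 1"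
  shows "path (sphere_segment P Q)" "pathstart (sphere_segment P Q) = P"
    "pathfinish (sphere_segment P Q) = Q" "path_image (sphere_segment P Q) \<subseteq> sphere 0 1"
proof -
  have "(1 - t) *\<^sub>R P + t *\<^sub>R Q \<noteq> 0" if "t \<in> {0..1}" for t
    using sphere_segment_closer(1)[OF P Q PQ, of t] that by (auto simp: sphere_segment_def)
  then show "path (sphere_segment P Q)"
    unfolding path_def sphere_segment_def by (intro continuous_intros) auto
  show "pathstart (sphere_segment P Q) = P" "pathfinish (sphere_segment P Q) = Q"
    using P Q by (simp_all add: sphere_segment_def pathstart_def pathfinish_def)
  show "path_image (sphere_segment P Q) \<subseteq> sphere 0 1"
    using sphere_segment_closer(1)[OF P Q PQ] by (auto simp: path_image_def)
qed

definition accessible_from :: "'a::topological_space set \<Rightarrow> 'a \<Rightarrow> bool" where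
  "accessible_from U y \<longleftrightarrow> (\<exists>\<gamma>. path \<gamma> \<and> pathfinish \<gamma> = y \<and> \<gamma> ` {0..<1} \<subseteq> U)"

lemma accessible_from_imp_closure:
  fixes y :: "'a::metric_space"
  assumes "accessible_from U y"
  shows "y \<in> closure U"
proof -
  obtain \<gamma> where \<gamma>: "path \<gamma>" "pathfinish \<gamma> = y" "\<gamma> ` {0..<1} \<subseteq> U"
    using assms unfolding accessible_from_def by blast
  have "\<gamma> ` closure {0..<1} \<subseteq> closure U"
    using \<gamma>(1,3) closure_subset unfolding path_def by (intro image_closure_subset) auto
  then show ?thesis
    using \<gamma>(2) by (auto simp: pathfinish_def)
qed

lemma accessible_from_arc:
  fixes y1 y2 :: "'a::{complete_space,real_normed_vector}"
  assumes U: "path_connected U" and y: "accessible_from U y1" "accessible_from U y2" "y1 \<noteq> y2"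
  obtains \<alpha> where "arc \<alpha>" "pathstart \<alpha> = y1" "pathfinish \<alpha> = y2" "path_image \<alpha> \<subseteq> U \<union> {y1, y2}"
proof -
  obtain \<gamma>1 where \<gamma>1: "path \<gamma>1" "pathfinish \<gamma>1 = y1" "\<gamma>1 ` {0..<1} \<subseteq> U"
    using y(1) unfolding accessible_from_def by blast
  obtain \<gamma>2 where \<gamma>2: "path \<gamma>2" "pathfinish \<gamma>2 = y2" "\<gamma>2 ` {0..<1} \<subseteq> U"
    using y(2) unfolding accessible_from_def by blast
  have "pathstart \<gamma>1 \<in> U" "pathstart \<gamma>2 \<in> U"
    using \<gamma>1(3) \<gamma>2(3) by (auto simp: pathstart_def)
  then obtain g where g: "path g" "path_image g \<subseteq> U" "pathstart g = pathstart \<gamma>1"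
      "pathfinish g = pathstart \<gamma>2"
    using U unfolding path_connected_def by blast
  have img: "path_image \<gamma> \<subseteq> U \<union> {pathfinish \<gamma>}" if "\<gamma> ` {0..<1} \<subseteq> U" for \<gamma> :: "real \<Rightarrow> 'a"
  proof
    fix z assume "z \<in> path_image \<gamma>"
    then obtain x where "x \<in> {0..1}" "z = \<gamma> x"
      by (auto simp: path_image_def)
    then show "z \<in> U \<union> {pathfinish \<gamma>}"
      using that by (cases "x = 1") (auto simp: pathfinish_def image_subset_iff)
  qed
  define p where "p = reversepath \<gamma>1 +++ (g +++ \<gamma>2)"
  have "path p" "pathstart p = y1" "pathfinish p = y2"
    using \<gamma>1 \<gamma>2 g by (auto simp: p_def)
  moreover have "path_image p \<subseteq> U \<union> {y1, y2}"
    using img[OF \<gamma>1(3)] img[OF \<gamma>2(3)] \<gamma>1 \<gamma>2 g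
    by (auto simp: p_def path_image_join path_image_reversepath dest!: subsetD[OF path_image_join_subset])
  ultimately show ?thesis
    using path_contains_arc[of p y1 y2] y(3) that by (metis order_trans)
qed

lemma continuous_on_unit_intervals:
  fixes P :: "real \<Rightarrow> 'a::topological_space"
  assumes "continuous_on {..0} P" "\<And>n. continuous_on {real n..real n + 1} P"
  shows "continuous_on UNIV P"
proof -
  have cont_n: "continuous_on {..real n} P" for n
  proof (induction n)
    case (Suc n)
    have "{..real (Suc n)} = {..real n} \<union> {real n..real n + 1}"
      by auto
    then show ?case
      using Suc assms(2)[of n] by (metis closed_atMost closed_real_atLeastAtMost continuous_on_closed_Un)
  qed (use assms(1) in simp)
  have "continuous_on {..<real n} P" for n
    by (rule continuous_on_subset[OF cont_n[of n]]) auto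
  then have "continuous_on (\<Union>n. {..<real n}) P"
    by (intro continuous_on_open_UN) auto
  moreover have "(\<Union>n. {..<real n}) = UNIV"
    by (auto intro: reals_Archimedean2)
  ultimately show ?thesis
    by simp
qed

lemma infinite_path_join:
  fixes p :: "nat \<Rightarrow> real \<Rightarrow> 'a::real_normed_vector"
  assumes p: "\<And>k. path (p k)" and join: "\<And>k. pathfinish (p k) = pathstart (p (Suc k))"
  obtains P :: "real \<Rightarrow> 'a" where "continuous_on UNIV P" "\<And>s. 0 \<le> s \<Longrightarrow> P s \<in> path_image (p (nat \<lfloor>s\<rfloor>))"
proof -
  define P where "P s = (if s < 0 then p 0 0 else p (nat \<lfloor>s\<rfloor>) (s - of_int \<lfloor>s\<rfloor>))" for s
  have P_piece: "P s = p k (s - real k)" if "real k \<le> s" "s \<le> real k + 1" for k s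
  proof (cases "s < real k + 1")
    case True
    then have "\<lfloor>s\<rfloor> = int k"
      using that by (simp add: floor_eq_iff)
    then show ?thesis
      using that by (simp add: P_def)
  next
    case False
    then have "s = real (Suc k)"
      using that by simp
    then have "nat \<lfloor>s\<rfloor> = Suc k" "s - of_int \<lfloor>s\<rfloor> = 0"
      unfolding \<open>s = real (Suc k)\<close> floor_of_nat nat_int by simp_all
    then have "P s = p (Suc k) 0"
      using \<open>s = real (Suc k)\<close> by (simp add: P_def)
    also have "\<dots> = p k 1"
      using join[of k] by (simp add: pathstart_def pathfinish_def)
    finally show ?thesis
      using \<open>s = real (Suc k)\<close> by simp
  qed
  have "continuous_on UNIV P"
  proof (rule continuous_on_unit_intervals)
    have "continuous_on {..0::real} (\<lambda>_. p 0 0)"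
      by simp
    then show "continuous_on {..0} P"
      by (rule continuous_on_eq) (auto simp: P_def)
    fix n
    have "continuous_on {real n..real n + 1} (\<lambda>s. p n (s - real n))"
      using p[of n] unfolding path_def
      by (rule continuous_on_compose2) (auto intro!: continuous_intros)
    then show "continuous_on {real n..real n + 1} P"
      by (rule continuous_on_eq) (use P_piece in auto)
  qed
  moreover have "P s \<in> path_image (p (nat \<lfloor>s\<rfloor>))" if "0 \<le> s" for s
  proof -
    have "s - of_int \<lfloor>s\<rfloor> \<in> {0..1}"
      using frac_lt_1[of s] frac_ge_0[of s] by (simp add: frac_def)
    then show ?thesis
      using that by (auto simp: P_def path_image_def)
  qed
  ultimately show ?thesis
    using that by blast
qed

lemma accessible_from_path_chain:
  fixes p :: "nat \<Rightarrow> real \<Rightarrow> 'a::real_normed_vector"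
  assumes p: "\<And>k. path (p k)" "\<And>k. pathfinish (p k) = pathstart (p (Suc k))"
    and U: "\<And>k. path_image (p k) \<subseteq> U"
    and small: "\<And>k. path_image (p k) \<subseteq> cball y (e k)" and e: "e \<longlonglongrightarrow> 0"
  shows "accessible_from U y"
proof -
  obtain P :: "real \<Rightarrow> 'a" where P: "continuous_on UNIV P" "\<And>s. 0 \<le> s \<Longrightarrow> P s \<in> path_image (p (nat \<lfloor>s\<rfloor>))"
    using infinite_path_join[of p, OF p(1) p(2)] by blast
  have "filterlim (\<lambda>s. nat \<lfloor>s\<rfloor>) sequentially at_top"
    by (rule filterlim_compose[OF filterlim_nat_sequentially filterlim_floor_sequentially])
  then have "((\<lambda>s. e (nat \<lfloor>s\<rfloor>)) \<longlongrightarrow> 0) at_top"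
    by (rule filterlim_compose[OF e])
  moreover have "\<forall>\<^sub>F s in at_top. norm (dist (P s) y) \<le> e (nat \<lfloor>s\<rfloor>)"
    using eventually_ge_at_top[of 0] by eventually_elim (use P(2) small in \<open>force simp: dist_commute\<close>)
  ultimately have "(P \<longlongrightarrow> y) at_top"
    by (subst tendsto_dist_iff) (rule Lim_null_comparison)
  moreover have "filterlim (\<lambda>t. t / (1 - t)) at_top (at_left (1::real))"
    by (rule LIM_at_top_divide)
       (auto intro!: tendsto_eq_intros eventually_at_leftI[of 0] simp: tendsto_ident_at)
  ultimately have lim: "((\<lambda>t. P (t / (1 - t))) \<longlongrightarrow> y) (at_left (1::real))"
    by (rule filterlim_compose)
  define \<gamma> where "\<gamma> t = (if t < 1 then P (t / (1 - t)) else y)" for t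
  have "continuous_on {..<1} (\<lambda>t. P (t / (1 - t)))"
    using P(1) by (rule continuous_on_compose2) (auto intro!: continuous_intros)
  then have "continuous_on {..<1} \<gamma>"
    by (rule continuous_on_eq) (simp add: \<gamma>_def)
  then have cont: "isCont \<gamma> t" if "t < 1" for t
    using that by (simp add: continuous_on_eq_continuous_at)
  have "eventually (\<lambda>t. t \<in> {0<..<1}) (at_left (1::real))"
    by (rule eventually_at_left_real) simp
  then have "eventually (\<lambda>t. P (t / (1 - t)) = \<gamma> t) (at_left 1)"
    by eventually_elim (simp add: \<gamma>_def)
  then have "(\<gamma> \<longlongrightarrow> y) (at_left 1)"
    using lim by (simp add: tendsto_cong)
  then have "(\<gamma> \<longlongrightarrow> \<gamma> 1) (at_left 1)"
    by (simp add: \<gamma>_def)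
  then have "path \<gamma>"
    unfolding path_def
  proof (rule continuous_on_IccI[rotated 1])
    show "(\<gamma> \<longlongrightarrow> \<gamma> 0) (at_right 0)"
      using cont[of 0] by (simp add: isCont_def filterlim_at_split)
    show "\<gamma> \<midarrow>t\<rightarrow> \<gamma> t" if "0 < t" "t < 1" for t
      using cont[of t] that by (simp add: isCont_def)
  qed (simp_all add: \<gamma>_def)
  moreover have "\<gamma> t \<in> U" if "t \<in> {0..<1}" for t
  proof -
    have "0 \<le> t / (1 - t)"
      using that by simp
    then show ?thesis
      using P(2) U that unfolding \<gamma>_def by (metis atLeastLessThan_iff subsetD)
  qed
  ultimately show ?thesis
    unfolding accessible_from_def by (intro exI[of _ \<gamma>]) (auto simp: \<gamma>_def pathfinish_def)
qed

definition first_exit_time :: "(real \<Rightarrow> 'a::metric_space) \<Rightarrow> real \<Rightarrow> real" where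
  "first_exit_time g s = Inf {t \<in> {0..1}. s \<le> dist (g t) (g 0)}"

lemma first_exit_time:
  fixes g :: "real \<Rightarrow> 'a::metric_space"
  assumes g: "path g" and s: "0 < s" "s \<le> dist (g 1) (g 0)"
  shows "first_exit_time g s \<in> {0..1}" "dist (g (first_exit_time g s)) (g 0) = s"
    "\<And>t. t \<in> {0..first_exit_time g s} \<Longrightarrow> dist (g t) (g 0) \<le> s"
proof -
  define A where "A = {t \<in> {0..1}. s \<le> dist (g t) (g 0)}"
  define \<tau> where "\<tau> = first_exit_time g s"
  have contd: "continuous_on {0..1} (\<lambda>t. dist (g t) (g 0))"
    using g unfolding path_def by (intro continuous_intros)
  have "closed A"
    unfolding A_def using continuous_closed_preimage[OF contd, of "{s..}"]
    by (simp add: vimage_def Int_def conj_commute)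
  moreover have "bdd_below A" "1 \<in> A"
    using s by (auto simp: A_def intro: bdd_belowI[of _ 0])
  ultimately have "\<tau> \<in> A"
    unfolding \<tau>_def first_exit_time_def A_def[symmetric] by (metis closed_contains_Inf empty_iff)
  then show \<tau>01: "first_exit_time g s \<in> {0..1}"
    by (simp add: A_def \<tau>_def)
  have ge: "s \<le> dist (g \<tau>) (g 0)"
    using \<open>\<tau> \<in> A\<close> by (simp add: A_def)
  have before: "dist (g t) (g 0) < s" if "t \<in> {0..<\<tau>}" for t
  proof (rule ccontr)
    assume "\<not> ?thesis"
    then have "t \<in> A"
      using that \<tau>01 by (auto simp: A_def \<tau>_def)
    then have "\<tau> \<le> t"
      unfolding \<tau>_def first_exit_time_def A_def[symmetric] by (rule cInf_lower[OF _ \<open>bdd_below A\<close>])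
    then show False
      using that by simp
  qed
  have "0 < \<tau>"
    using ge s \<tau>01 by (cases "\<tau> = 0") (auto simp: \<tau>_def)
  have "closed ({0..1} \<inter> (\<lambda>t. dist (g t) (g 0)) -` {..s})"
    by (rule continuous_closed_preimage[OF contd]) auto
  moreover have "{0..<\<tau>} \<subseteq> {0..1} \<inter> (\<lambda>t. dist (g t) (g 0)) -` {..s}"
    using before \<tau>01 by (fastforce simp: \<tau>_def)
  ultimately have "closure {0..<\<tau>} \<subseteq> {0..1} \<inter> (\<lambda>t. dist (g t) (g 0)) -` {..s}"
    by (rule closure_minimal[rotated])
  then show le: "\<And>t. t \<in> {0..first_exit_time g s} \<Longrightarrow> dist (g t) (g 0) \<le> s"
    using \<open>0 < \<tau>\<close> by (auto simp: \<tau>_def)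
  show "dist (g (first_exit_time g s)) (g 0) = s"
    using le[of \<tau>] ge \<open>0 < \<tau>\<close> by (simp add: \<tau>_def)
qed

lemma first_exit_time_mono:
  "s' \<le> s \<Longrightarrow> s \<le> dist (g 1) (g 0) \<Longrightarrow> first_exit_time g s' \<le> first_exit_time g s"
  unfolding first_exit_time_def by (rule cInf_superset_mono) (auto intro: bdd_belowI[of _ 0])

lemma first_exit_time_deep:
  fixes g :: "real \<Rightarrow> 'a::metric_space"
  assumes "path g" "0 < s" "2 * s \<le> dist (g 0) (g 1)"
    and cone: "\<And>t. t \<in> {0..1} \<Longrightarrow> min (dist (g t) (g 0)) (dist (g t) (g 1)) \<le> \<phi> (g t)"
  shows "s \<le> \<phi> (g (first_exit_time g s))"
proof -
  have "s \<le> dist (g 1) (g 0)"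
    using assms by (simp add: dist_commute)
  note exit = first_exit_time(1,2)[OF assms(1,2) this]
  have "dist (g 0) (g 1) \<le> dist (g (first_exit_time g s)) (g 0) + dist (g (first_exit_time g s)) (g 1)"
    by (metis dist_commute dist_triangle)
  then have "s \<le> min (dist (g (first_exit_time g s)) (g 0)) (dist (g (first_exit_time g s)) (g 1))"
    using exit(2) assms(3) by simp
  also have "\<dots> \<le> \<phi> (g (first_exit_time g s))"
    by (rule cone[OF exit(1)])
  finally show ?thesis .
qed

lemma infinite_subset_pairwise_close:
  fixes f :: "nat \<Rightarrow> 'a::heine_borel"
  assumes I: "infinite I" and f: "\<And>n. n \<in> I \<Longrightarrow> f n \<in> cball y r" and \<rho>: "0 < \<rho>"
  obtains I' where "I' \<subseteq> I" "infinite I'" "\<And>n n'. n \<in> I' \<Longrightarrow> n' \<in> I' \<Longrightarrow> dist (f n) (f n') < \<rho>"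
proof -
  obtain T where T: "finite T" "cball y r \<subseteq> (\<Union>x\<in>T. ball x (\<rho>/2))"
  proof (rule compactE_image[OF compact_cball, of "cball y r" "\<lambda>x. ball x (\<rho>/2)"])
    show "cball y r \<subseteq> (\<Union>x\<in>cball y r. ball x (\<rho>/2))"
      using \<rho> by force
  qed auto
  have "I \<subseteq> (\<Union>x\<in>T. {n\<in>I. f n \<in> ball x (\<rho>/2)})"
    using T(2) f by blast
  then have "infinite (\<Union>x\<in>T. {n\<in>I. f n \<in> ball x (\<rho>/2)})"
    using I finite_subset by blast
  then obtain x where "infinite {n\<in>I. f n \<in> ball x (\<rho>/2)}"
    using T(1) by (meson finite_UN_I)
  moreover have "dist (f n) (f n') < \<rho>" if "f n \<in> ball x (\<rho>/2)" "f n' \<in> ball x (\<rho>/2)" for n n'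
    using that dist_triangle_half_l[of "f n" x \<rho> "f n'"] by (simp add: dist_commute)
  ultimately show ?thesis
    using that[of "{n\<in>I. f n \<in> ball x (\<rho>/2)}"] by blast
qed

lemma diagonal_pairwise_close:
  fixes f :: "nat \<Rightarrow> nat \<Rightarrow> 'a::heine_borel"
  assumes f: "\<And>n k. k \<le> n \<Longrightarrow> f n k \<in> cball y (r k)" and \<rho>: "\<And>k. 0 < \<rho> k"
  obtains N where "\<And>k. k \<le> N k" "\<And>k. dist (f (N k) k) (f (N (Suc k)) k) < \<rho> k"
proof -
  define good where "good k I \<longleftrightarrow> infinite I \<and> I \<subseteq> {k..} \<and> (\<forall>n\<in>I. \<forall>n'\<in>I. dist (f n k) (f n' k) < \<rho> k)"
    for k I
  have refine: "\<exists>I'. good k I' \<and> I' \<subseteq> I" if "infinite I" for k I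
  proof -
    have "infinite (I - {..<k})"
      using that by (simp add: Diff_infinite_finite)
    moreover have "f n k \<in> cball y (r k)" if "n \<in> I - {..<k}" for n
      using f that by simp
    ultimately obtain I' where "I' \<subseteq> I - {..<k}" "infinite I'"
      "\<And>n n'. n \<in> I' \<Longrightarrow> n' \<in> I' \<Longrightarrow> dist (f n k) (f n' k) < \<rho> k"
      using infinite_subset_pairwise_close[of "I - {..<k}" "\<lambda>n. f n k"] \<rho> by metis
    then show ?thesis
      unfolding good_def by (intro exI[of _ I']) auto
  qed
  have "\<exists>I. \<forall>k. good k (I k) \<and> I (Suc k) \<subseteq> I k"
  proof (rule dependent_nat_choice)
    show "\<exists>I. good 0 I"
      using refine[of UNIV 0] by auto
    show "\<exists>I'. good (Suc k) I' \<and> I' \<subseteq> I" if "good k I" for I k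
      using refine[of I "Suc k"] that by (auto simp: good_def)
  qed
  then obtain I where I: "\<And>k. good k (I k)" "\<And>k. I (Suc k) \<subseteq> I k"
    by blast
  have "\<forall>k. \<exists>n. n \<in> I k"
    using I(1) unfolding good_def by (metis ex_in_conv finite.emptyI)
  then obtain N where N: "\<And>k. N k \<in> I k"
    by metis
  show ?thesis
  proof (rule that)
    show "k \<le> N k" for k
      using N I(1) by (auto simp: good_def)
    show "dist (f (N k) k) (f (N (Suc k)) k) < \<rho> k" for k
      using N[of k] N[of "Suc k"] I(1)[of k] I(2)[of k] by (auto simp: good_def)
  qed
qed

lemma path_image_sphere_segment_subset:
  assumes P: "P \<in> S2" and Q: "Q \<in> S2" and PQ: "dist P Q < 1" "dist P Q < infdist P (S2 - D)"
  shows "path_image (sphere_segment P Q) \<subseteq> D \<inter> cball P (dist P Q)"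
proof
  fix z assume "z \<in> path_image (sphere_segment P Q)"
  then obtain t where t: "0 \<le> t" "t \<le> 1" "z = sphere_segment P Q t"
    by (auto simp: path_image_def)
  note closer = sphere_segment_closer[OF S2_norm[OF P] S2_norm[OF Q] PQ(1) t(1,2)]
  have "z \<in> D"
  proof (rule ccontr)
    assume "z \<notin> D"
    then have "infdist P (S2 - D) \<le> dist P z"
      using closer(1) t(3) by (intro infdist_le) (simp add: S2_def)
    moreover have "dist P z \<le> dist P Q"
      using closer(2) t(3) by simp
    ultimately show False
      using PQ(2) by linarith
  qed
  then show "z \<in> D \<inter> cball P (dist P Q)"
    using closer(2) t(3) by simp
qed

lemma accessible_from_chain_of_arcs:
  fixes g :: "nat \<Rightarrow> real \<Rightarrow> real^3"
  assumes D: "D \<subseteq> S2"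
    and g: "\<And>k. path (g k)" "\<And>k. 0 \<le> v k" "\<And>k. v k \<le> u k" "\<And>k. u k \<le> 1"
      "\<And>k. g k ` {v k..u k} \<subseteq> D \<inter> cball y (r k)" "\<And>k. g k (v k) = P (Suc k)"
    and P: "\<And>k. P k \<in> D" "\<And>k. P k \<in> cball y (r k)"
      "\<And>k. dist (P k) (g k (u k)) < infdist (P k) (S2 - D)" "\<And>k. dist (P k) (g k (u k)) \<le> r k"
    and r: "\<And>k. r k < 1" "r \<longlonglongrightarrow> 0"
  shows "accessible_from D y"
proof -
  define Q where "Q k = g k (u k)" for k
  define tail where "tail k = subpath (u k) (v k) (g k)" for k
  define piece where "piece k = sphere_segment (P k) (Q k) +++ tail k" for k
  have tail_img: "path_image (tail k) = g k ` {v k..u k}" for k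
  proof (cases "u k = v k")
    case False
    then show ?thesis
      using g(3)[of k] by (simp add: tail_def path_image_subpath)
  qed (simp add: tail_def path_image_subpath)
  have "Q k \<in> D" for k
    using g(3,5)[of k] by (auto simp: Q_def)
  then have PQ: "P k \<in> S2" "Q k \<in> S2" "dist (P k) (Q k) < 1" for k
    using D P(1,4)[of k] r(1)[of k] by (auto simp: Q_def)
  note seg = path_sphere_segment[OF S2_norm[OF PQ(1)] S2_norm[OF PQ(2)] PQ(3)]
  have seg_img: "path_image (sphere_segment (P k) (Q k)) \<subseteq> D \<inter> cball y (2 * r k)" for k
  proof -
    have "z \<in> cball y (2 * r k)" if "z \<in> cball (P k) (dist (P k) (Q k))" for z
      using that dist_triangle[of y z "P k"] P(2,4)[of k] by (simp add: Q_def)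
    then show ?thesis
      using path_image_sphere_segment_subset[OF PQ P(3)[of k, folded Q_def]] by blast
  qed
  have tail_path: "path (tail k)" "pathstart (tail k) = Q k" "pathfinish (tail k) = P (Suc k)" for k
    using g(1-4)[of k] by (simp_all add: tail_def Q_def g(6))
  have join: "pathfinish (sphere_segment (P k) (Q k)) = pathstart (tail k)" for k
    using seg(3) tail_path(2) by simp
  have piece_img: "path_image (piece k) = path_image (sphere_segment (P k) (Q k)) \<union> path_image (tail k)"
    for k
    unfolding piece_def by (rule path_image_join[OF join])
  show ?thesis
  proof (rule accessible_from_path_chain)
    show "path (piece k)" for k
      unfolding piece_def by (intro path_join_imp seg(1) tail_path(1) join)
    have "0 \<le> r k" for k
      using P(4)[of k] by (meson zero_le_dist order_trans)
    then have "cball y (r k) \<subseteq> cball y (2 * r k)" for k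
      by (intro subset_cball) simp
    then show "path_image (piece k) \<subseteq> D" "path_image (piece k) \<subseteq> cball y (2 * r k)" for k
      using seg_img[of k] g(5)[of k] unfolding piece_img tail_img by blast+
    show "pathfinish (piece k) = pathstart (piece (Suc k))" for k
      unfolding piece_def pathfinish_join pathstart_join tail_path(3) seg(2) ..
    show "(\<lambda>k. 2 * r k) \<longlonglongrightarrow> 0"
      using tendsto_mult_right_zero[OF r(2), of 2] by (simp add: mult.commute)
  qed
qed

text \<open>The exit points of the \<open>n\<close>-th path at scale \<open>k\<close> lie in a compact ball, so a diagonal
  choice of paths \<open>N k\<close> makes consecutive exit points closer than their depth.\<close>
lemma accessible_from_deep_exit_points:
  fixes h :: "nat \<Rightarrow> real \<Rightarrow> real^3" and \<tau> :: "nat \<Rightarrow> nat \<Rightarrow> real"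
  assumes D: "D \<subseteq> S2"
    and h: "\<And>n. path (h n)" "\<And>n. h n ` {0..1} \<subseteq> D"
    and \<tau>: "\<And>n k. k \<le> n \<Longrightarrow> \<tau> n k \<in> {0..1}" "\<And>n k. Suc k \<le> n \<Longrightarrow> \<tau> n (Suc k) \<le> \<tau> n k"
    and near: "\<And>n k t. k \<le> n \<Longrightarrow> t \<in> {0..\<tau> n k} \<Longrightarrow> h n t \<in> cball y (r k)"
    and deep: "\<And>n k. k \<le> n \<Longrightarrow> \<delta> k \<le> infdist (h n (\<tau> n k)) (S2 - D)"
    and \<delta>: "\<And>k. 0 < \<delta> k" "\<And>k. \<delta> k \<le> r k"
    and r: "\<And>k. r k < 1" "r \<longlonglongrightarrow> 0"
  shows "accessible_from D y"
proof -
  define x where "x n k = h n (\<tau> n k)" for n k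
  have x_near: "x n k \<in> cball y (r k)" if "k \<le> n" for n k
    using near[OF that, of "\<tau> n k"] \<tau>(1)[OF that] by (simp add: x_def)
  obtain N where N: "\<And>k. k \<le> N k" "\<And>k. dist (x (N k) k) (x (N (Suc k)) k) < \<delta> k"
    using diagonal_pairwise_close[of x y r \<delta>] x_near \<delta>(1) by blast
  have N': "k \<le> N (Suc k)" "Suc k \<le> N (Suc k)" for k
    using N(1)[of "Suc k"] by auto
  note \<tau>_N = \<tau>(1)[OF N(1)] \<tau>(1)[OF N'(1)] \<tau>(1)[OF N'(2)]
  show ?thesis
  proof (rule accessible_from_chain_of_arcs[where g = "\<lambda>k. h (N (Suc k))" and P = "\<lambda>k. x (N k) k"
        and u = "\<lambda>k. \<tau> (N (Suc k)) k" and v = "\<lambda>k. \<tau> (N (Suc k)) (Suc k)"])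
    show "h (N (Suc k)) ` {\<tau> (N (Suc k)) (Suc k)..\<tau> (N (Suc k)) k} \<subseteq> D \<inter> cball y (r k)" for k
    proof (rule image_subsetI)
      fix t assume t: "t \<in> {\<tau> (N (Suc k)) (Suc k)..\<tau> (N (Suc k)) k}"
      then have "h (N (Suc k)) t \<in> D"
        using h(2)[of "N (Suc k)"] \<tau>_N(2,3)[of k] by auto
      moreover have "h (N (Suc k)) t \<in> cball y (r k)"
        using near[OF N'(1)] t \<tau>_N(3)[of k] by simp
      ultimately show "h (N (Suc k)) t \<in> D \<inter> cball y (r k)"
        by blast
    qed
    show "x (N k) k \<in> D" for k
      using h(2)[of "N k"] \<tau>_N(1)[of k] by (auto simp: x_def)
    show "dist (x (N k) k) (h (N (Suc k)) (\<tau> (N (Suc k)) k)) < infdist (x (N k) k) (S2 - D)"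
      "dist (x (N k) k) (h (N (Suc k)) (\<tau> (N (Suc k)) k)) \<le> r k" for k
      using N(2)[of k] deep[OF N(1)[of k]] \<delta>(2)[of k] by (simp_all add: x_def)
    show "0 \<le> \<tau> (N (Suc k)) (Suc k)" "\<tau> (N (Suc k)) k \<le> 1" for k
      using \<tau>_N(2,3)[of k] by simp_all
    show "\<tau> (N (Suc k)) (Suc k) \<le> \<tau> (N (Suc k)) k" for k
      by (rule \<tau>(2)[OF N'(2)])
    show "h (N (Suc k)) (\<tau> (N (Suc k)) (Suc k)) = x (N (Suc k)) (Suc k)" for k
      by (simp add: x_def)
    show "x (N k) k \<in> cball y (r k)" for k
      by (rule x_near[OF N(1)])
  qed (use D h(1) r in auto)
qed

text \<open>John paths from points \<open>a n \<rightarrow> y\<close> to a fixed \<open>x0\<close> leave the ball of radius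
  \<open>s k = \<sigma> / 2^k\<close> around \<open>a n\<close> at points of depth at least \<open>s k / C\<close>.\<close>
lemma chordal_john_accessible_from:
  assumes john: "chordal_john C D" and C: "C \<ge> 1" and D: "D \<subseteq> S2" and x0: "x0 \<in> D"
    and y: "y \<in> closure D" "y \<notin> D"
  shows "accessible_from D y"
proof -
  define \<sigma> where "\<sigma> = min (dist x0 y / 4) (1/2)"
  have \<sigma>: "0 < \<sigma>" "4 * \<sigma> \<le> dist x0 y" "\<sigma> \<le> 1/2"
    using x0 y by (auto simp: \<sigma>_def)
  define s where "s k = \<sigma> * (1/2) ^ k" for k :: nat
  have s: "0 < s k" "s k \<le> \<sigma>" "s (Suc k) \<le> s k" for k
    using \<sigma> by (auto simp: s_def power_le_one)
  have s_mono: "s n \<le> s k" if "k \<le> n" for k n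
    using \<sigma>(1) that by (simp add: s_def power_decreasing)
  have "\<exists>z\<in>D. dist z y < s n / 2" for n
    using y(1) s(1)[of n] unfolding closure_approachable by (metis half_gt_zero)
  then obtain a where a: "\<And>n. a n \<in> D" "\<And>n. dist (a n) y < s n / 2"
    by metis
  then have "\<exists>g. path g \<and> g ` {0..1} \<subseteq> D \<and> g 0 = a n \<and> g 1 = x0 \<and>
      (\<forall>t\<in>{0..1}. min (dist (g t) (a n)) (dist (g t) x0) \<le> C * infdist (g t) (S2 - D))" for n
    using john x0 unfolding chordal_john_def by blast
  then obtain g where g: "\<And>n. path (g n)" "\<And>n. g n ` {0..1} \<subseteq> D" "\<And>n. g n 0 = a n" "\<And>n. g n 1 = x0"
    and cone: "\<And>n t. t \<in> {0..1} \<Longrightarrow>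
      min (dist (g n t) (a n)) (dist (g n t) x0) \<le> C * infdist (g n t) (S2 - D)"
    by metis
  have far: "2 * s k \<le> dist (a n) x0" for n k
  proof -
    have "dist x0 y \<le> dist x0 (a n) + dist (a n) y"
      by (rule dist_triangle)
    then show ?thesis
      using a(2)[of n] s(2)[of n] s(2)[of k] \<sigma>(1,2) by (simp add: dist_commute)
  qed
  define \<tau> where "\<tau> n k = first_exit_time (g n) (s k)" for n k
  have far': "s k \<le> dist (g n 1) (g n 0)" for n k
    using far[of k n] s(1)[of k] by (simp add: g(3,4) dist_commute)
  note exit = first_exit_time[OF g(1) s(1) far', folded \<tau>_def, unfolded g(3)]
  show ?thesis
  proof (rule accessible_from_deep_exit_points[where \<tau> = \<tau> and r = "\<lambda>k. 3/2 * s k"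
        and \<delta> = "\<lambda>k. s k / C"])
    show "\<tau> n k \<in> {0..1}" for n k
      by (rule exit(1))
    show "\<tau> n (Suc k) \<le> \<tau> n k" for n k
      unfolding \<tau>_def using s(3) far' by (rule first_exit_time_mono)
    show "g n t \<in> cball y (3/2 * s k)" if "k \<le> n" "t \<in> {0..\<tau> n k}" for n k t
      using dist_triangle[of y "g n t" "a n"] exit(3)[OF that(2)] a(2)[of n] s_mono[OF that(1)]
      by (simp add: dist_commute)
    show "s k / C \<le> infdist (g n (\<tau> n k)) (S2 - D)" for n k
    proof -
      have "s k \<le> C * infdist (g n (\<tau> n k)) (S2 - D)"
        unfolding \<tau>_def
      proof (rule first_exit_time_deep[where \<phi> = "\<lambda>z. C * infdist z (S2 - D)"])
        show "path (g n)" "0 < s k"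
          by (rule g(1), rule s(1))
        show "2 * s k \<le> dist (g n 0) (g n 1)"
          using far[of k n] by (simp add: g(3,4))
        show "min (dist (g n t) (g n 0)) (dist (g n t) (g n 1)) \<le> C * infdist (g n t) (S2 - D)"
          if "t \<in> {0..1}" for t
          using cone[OF that] by (simp add: g(3,4))
      qed
      then show ?thesis
        using C by (simp add: divide_le_eq mult.commute)
    qed
    show "0 < s k / C" "s k / C \<le> 3/2 * s k" "3/2 * s k < 1" for k
      using s(1,2)[of k] C \<sigma>(3) by (auto simp: divide_le_eq)
    show "(\<lambda>k. 3/2 * s k) \<longlonglongrightarrow> 0"
      unfolding s_def by (intro tendsto_mult_right_zero LIMSEQ_power_zero) auto
  qed (use D g in auto)
qed

lemma closure_of_S2: "A \<subseteq> S2 \<Longrightarrow> (top_of_set S2) closure_of A = closure A"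
  using closure_minimal[of A S2] by (auto simp: closure_of_subtopology S2_def Int_absorb1)

lemma frontier_of_S2_openin:
  "openin (top_of_set S2) A \<Longrightarrow> (top_of_set S2) frontier_of A = closure A - A"
  by (simp add: frontier_of_openin closure_of_S2 openin_imp_subset)

lemma sphere_minus_point_homeomorphic_plane:
  assumes "p \<in> S2"
  shows "(S2 - {p}) homeomorphic (UNIV :: complex set)"
proof -
  have "(S2 - {p}) homeomorphic {x::real^3. axis 1 1 \<bullet> x = 0}"
    unfolding S2_def by (rule homeomorphic_punctured_sphere_hyperplane) (use assms in \<open>auto simp: S2_def\<close>)
  also have "\<dots> homeomorphic (UNIV :: complex set)"
    by (subst homeomorphic_affine_sets_eq) (auto simp: affine_hyperplane aff_dim_hyperplane)
  finally show ?thesis .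
qed

lemma path_connected_openin_S2:
  assumes "openin (top_of_set S2) U" "connected U"
  shows "path_connected U"
proof -
  have "locally path_connected U"
    using locally_path_connected_sphere assms(1) unfolding S2_def by (rule locally_open_subset)
  then have "path_component_set U a = U" if "a \<in> U" for a
    using path_component_eq_connected_component_set connected_component_eq_self[OF assms(2) that]
    by metis
  then show ?thesis
    unfolding path_connected_component by blast
qed

text \<open>If the frontier lay inside \<open>{w}\<close>, the connected set \<open>S2 - {w}\<close>, which meets both \<open>D\<close> and
  its complement, would have to avoid it.\<close>
lemma frontier_of_S2_two_points:
  assumes D: "openin (top_of_set S2) D" "D \<noteq> {}" and ab: "a \<in> S2 - D" "b \<in> S2 - D" "a \<noteq> b"
  obtains w1 w2 where "w1 \<in> (top_of_set S2) frontier_of D" "w2 \<in> (top_of_set S2) frontier_of D" "w1 \<noteq> w2"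
proof -
  let ?F = "(top_of_set S2) frontier_of D"
  have DS: "D \<subseteq> S2"
    using D(1) by (rule openin_imp_subset)
  have F_D: "?F \<inter> D = {}"
    using D(1) by (auto simp: frontier_of_openin)
  obtain w where w: "w \<in> S2" "w \<notin> D" "?F \<noteq> {} \<Longrightarrow> w \<in> ?F"
  proof (cases "?F = {}")
    case True
    then show ?thesis
      using that[of a] ab by blast
  next
    case False
    then obtain w where "w \<in> ?F"
      by blast
    then show ?thesis
      using that[of w] F_D frontier_of_subset_topspace[of "top_of_set S2" D] by auto
  qed
  obtain c where c: "c \<in> S2 - D" "c \<noteq> w"
    using ab by blast
  have "connectedin (top_of_set S2) (S2 - {w})"
    using sphere_minus_point_homeomorphic_plane[OF w(1)] connected_UNIV
    by (auto simp: connectedin_subtopology homeomorphic_connectedness)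
  moreover have "(S2 - {w}) \<inter> D \<noteq> {}" "(S2 - {w}) - D \<noteq> {}"
    using D(2) DS w(2) c by blast+
  ultimately have "(S2 - {w}) \<inter> ?F \<noteq> {}"
    by (rule connectedin_Int_frontier_of)
  then obtain w' where "w' \<in> ?F" "w' \<noteq> w"
    by blast
  with w(3) show ?thesis
    using that by blast
qed

text \<open>The nearest point of the complement of \<open>U\<close> to a point \<open>q \<in> U\<close> is reached from \<open>q\<close> along a
  great-circle arc inside \<open>U\<close>.\<close>
lemma frontier_of_S2_accessible_near:
  assumes U: "openin (top_of_set S2) U" and w: "w \<in> (top_of_set S2) frontier_of U" and "0 < \<epsilon>"
  obtains z where "z \<in> (top_of_set S2) frontier_of U" "dist z w < \<epsilon>" "accessible_from U z"
proof -
  have US: "U \<subseteq> S2"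
    using U by (rule openin_imp_subset)
  have w': "w \<in> closure U" "w \<in> S2 - U"
    using w frontier_of_subset_topspace[of "top_of_set S2" U] by (auto simp: frontier_of_S2_openin[OF U])
  obtain q where q: "q \<in> U" "dist q w < min (\<epsilon>/2) 1"
    using w'(1) \<open>0 < \<epsilon>\<close> unfolding closure_approachable by (metis dist_commute min_less_iff_conj
        half_gt_zero zero_less_one)
  have "closedin (top_of_set S2) (S2 - U)"
    using U by (simp add: closedin_def US Diff_Diff_Int Int_absorb1)
  then have "closed (S2 - U)"
    by (rule closedin_closed_trans) (simp add: S2_def)
  then obtain z where z: "z \<in> S2 - U" "\<And>x. x \<in> S2 - U \<Longrightarrow> dist q z \<le> dist q x"
    using distance_attains_inf[of "S2 - U" q] w'(2) by blast
  have qz: "dist q z < 1" "q \<noteq> z" "norm q = 1" "norm z = 1"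
    using z(2)[OF w'(2)] q z(1) US by (auto simp: S2_norm subset_iff)
  note seg = path_sphere_segment[OF qz(3,4,1)]
  have "sphere_segment q z t \<in> U" if "t \<in> {0..<1}" for t
  proof (rule ccontr)
    assume "sphere_segment q z t \<notin> U"
    moreover have "sphere_segment q z t \<in> S2"
      using seg(4) that by (auto simp: path_image_def S2_def image_subset_iff)
    ultimately have "dist q z \<le> dist q (sphere_segment q z t)"
      using z(2) by blast
    then show False
      using sphere_segment_closer(3)[OF qz(3,4,1)] that qz(2) by fastforce
  qed
  then have acc: "accessible_from U z"
    unfolding accessible_from_def using seg(1,3) by blast
  have "z \<in> (top_of_set S2) frontier_of U"
    using accessible_from_imp_closure[OF acc] z(1) by (simp add: frontier_of_S2_openin[OF U])
  moreover have "dist z w < \<epsilon>"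
    using dist_triangle[of z w q] z(2)[OF w'(2)] q(2) by (simp add: dist_commute)
  ultimately show ?thesis
    using that acc by blast
qed

lemma closure_image_bounded:
  fixes f :: "'a::heine_borel \<Rightarrow> 'b::metric_space"
  assumes f: "continuous_on (closure S) f" and S: "bounded S"
  shows "closure (f ` S) = f ` closure S"
proof
  have "compact (f ` closure S)"
    using S by (intro compact_continuous_image[OF f]) (simp add: compact_closure)
  moreover have "f ` S \<subseteq> f ` closure S"
    by (rule image_mono[OF closure_subset])
  ultimately show "closure (f ` S) \<subseteq> f ` closure S"
    by (intro closure_minimal compact_imp_closed)
  show "f ` closure S \<subseteq> closure (f ` S)"
    using f by (rule image_closure_subset) (simp_all add: closure_subset)
qed

text \<open>The bounded complementary component of the image of the curve in the plane, pulled back to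
  the sphere.\<close>
lemma Jordan_curve_punctured_S2:
  fixes c :: "real \<Rightarrow> real^3"
  assumes c: "simple_path c" "pathfinish c = pathstart c" and p: "p \<in> S2"
    and cS: "path_image c \<subseteq> S2 - {p}"
  obtains W where "openin (top_of_set S2) W" "connected W" "p \<notin> W"
    "(top_of_set S2) frontier_of W = path_image c"
proof -
  obtain h k where hom: "homeomorphism (S2 - {p}) (UNIV :: complex set) h k"
    using sphere_minus_point_homeomorphic_plane[OF p] unfolding homeomorphic_def by blast
  then have hk: "\<And>x. x \<in> S2 - {p} \<Longrightarrow> k (h x) = x" and kh: "\<And>z. h (k z) = z"
    and k: "range k = S2 - {p}" "continuous_on UNIV k" and h: "continuous_on (S2 - {p}) h"
    by (auto simp: homeomorphism_def)
  let ?J = "path_image c"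
  have "inj_on h ?J"
    by (rule inj_on_inverseI[where g = k]) (use cS hk in blast)
  then have "simple_path (h \<circ> c)"
    using c(1) continuous_on_subset[OF h cS] by (intro simple_path_continuous_image)
  moreover have "pathfinish (h \<circ> c) = pathstart (h \<circ> c)"
    using c(2) by (simp add: pathfinish_def pathstart_def)
  ultimately obtain inner outer where
    inner: "open inner" "connected inner" "bounded inner" "frontier inner = path_image (h \<circ> c)"
    and "inner \<union> outer = - path_image (h \<circ> c)"
    by (rule Jordan_curve)
  then have inner_J: "inner \<inter> h ` ?J = {}"
    by (auto simp: path_image_compose)
  define W where "W = k ` inner"
  have W_preimage: "W = (S2 - {p}) \<inter> h -` inner"
    using k(1) kh hk unfolding W_def by (auto intro: rev_image_eqI)
  have "openin (top_of_set S2) W"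
    unfolding W_preimage using continuous_openin_preimage_gen[OF h inner(1)]
    by (rule openin_trans) (simp add: openin_delete)
  moreover have "connected W"
    unfolding W_def using continuous_on_subset[OF k(2)] inner(2) by (rule connected_continuous_image) simp
  moreover have "p \<notin> W"
    using k(1) by (auto simp: W_def)
  moreover have "(top_of_set S2) frontier_of W = ?J"
  proof -
    have "closure W = k ` closure inner"
      unfolding W_def using continuous_on_subset[OF k(2)] inner(3) by (rule closure_image_bounded) simp
    also have "\<dots> = W \<union> k ` h ` ?J"
      using closure_Un_frontier[of inner] inner(4) by (simp add: W_def image_Un path_image_compose)
    also have "k ` h ` ?J = ?J"
      using cS hk by (force simp: image_image)
    finally have "closure W = W \<union> ?J" .
    moreover have "W \<inter> ?J = {}"
      using W_preimage inner_J by blast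
    ultimately show ?thesis
      using \<open>openin (top_of_set S2) W\<close> by (auto simp: frontier_of_S2_openin)
  qed
  ultimately show ?thesis
    using that by blast
qed

lemma arc_midpoint:
  assumes "arc \<alpha>"
  shows "\<alpha> (1/2) \<in> path_image \<alpha> - {pathstart \<alpha>, pathfinish \<alpha>}"
proof -
  have inj: "inj_on \<alpha> {0..1}"
    using assms by (simp add: arc_def)
  have "\<alpha> (1/2) \<noteq> \<alpha> 0" "\<alpha> (1/2) \<noteq> \<alpha> 1"
    using inj_onD[OF inj, of "1/2" 0] inj_onD[OF inj, of "1/2" 1] by auto
  then show ?thesis
    by (auto simp: path_image_def pathstart_def pathfinish_def)
qed

text \<open>The side of the Jordan curve \<open>\<alpha> +++ \<beta>\<close> not containing \<open>p\<close> meets \<open>D\<close> and \<open>M2\<close>, hence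
  the frontier of \<open>D\<close>.\<close>
lemma Jordan_arcs_frontier_of_not_subset_closure_of:
  assumes D: "openin (top_of_set S2) D" and M2: "openin (top_of_set S2) M2"
    and M3: "openin (top_of_set S2) M3" "connected M3" "p \<in> M3"
    and disj: "D \<inter> M2 = {}" "D \<inter> M3 = {}" "M2 \<inter> M3 = {}"
    and \<alpha>: "arc \<alpha>" "pathstart \<alpha> = z1" "pathfinish \<alpha> = z2" "path_image \<alpha> \<subseteq> D \<union> {z1, z2}"
    and \<beta>: "arc \<beta>" "pathstart \<beta> = z2" "pathfinish \<beta> = z1" "path_image \<beta> \<subseteq> M2 \<union> {z1, z2}"
    and z: "z1 \<in> S2 - M3" "z2 \<in> S2 - M3"
  shows "\<not> (top_of_set S2) frontier_of D \<subseteq> (top_of_set S2) closure_of M3"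
proof
  let ?X = "top_of_set S2"
  assume fr: "?X frontier_of D \<subseteq> ?X closure_of M3"
  have S: "D \<subseteq> S2" "M2 \<subseteq> S2" "M3 \<subseteq> S2"
    using D M2 M3(1) by (auto dest: openin_imp_subset)
  define J where "J = path_image (\<alpha> +++ \<beta>)"
  have J: "J = path_image \<alpha> \<union> path_image \<beta>"
    unfolding J_def using \<alpha>(3) \<beta>(2) by (simp add: path_image_join)
  have simple: "simple_path (\<alpha> +++ \<beta>)"
    using \<alpha> \<beta> disj(1) by (intro simple_path_join_loop) auto
  have loop: "pathfinish (\<alpha> +++ \<beta>) = pathstart (\<alpha> +++ \<beta>)"
    using \<alpha>(2) \<beta>(3) by simp
  have M3_J: "M3 \<inter> J = {}"
    unfolding J using \<alpha>(4) \<beta>(4) z disj by auto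
  have "J \<subseteq> S2 - {p}"
    unfolding J using \<alpha>(4) \<beta>(4) S(1,2) z M3_J M3(3) J by auto
  then obtain W where W: "openin ?X W" "connected W" "p \<notin> W" "?X frontier_of W = J"
    using Jordan_curve_punctured_S2[OF simple loop, of p] M3(3) S(3) unfolding J_def by blast
  have meets: "W \<inter> U \<noteq> {}" if "openin ?X U" "x \<in> U" "x \<in> J" for U x
  proof -
    have "x \<in> ?X closure_of W"
      using that(3) W(4) by (auto simp: frontier_of_def)
    then show ?thesis
      using openin_Int_closure_of_eq_empty[OF that(1), of W] that(2) by blast
  qed
  have "\<alpha> (1/2) \<in> D \<inter> J" "\<beta> (1/2) \<in> M2 \<inter> J"
    using arc_midpoint[OF \<alpha>(1)] arc_midpoint[OF \<beta>(1)] \<alpha> \<beta> J by auto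
  then have "W \<inter> D \<noteq> {}" "W - D \<noteq> {}"
    using meets[OF D] meets[OF M2] disj(1) by blast+
  moreover have "connectedin ?X W"
    using W(1,2) by (simp add: connectedin_subtopology openin_imp_subset)
  ultimately have "W \<inter> ?X frontier_of D \<noteq> {}"
    by (intro connectedin_Int_frontier_of)
  then have "M3 \<inter> W \<noteq> {}"
    using fr openin_Int_closure_of_eq_empty[OF W(1), of M3] by blast
  moreover have "M3 - W \<noteq> {}"
    using M3(3) W(3) by blast
  moreover have "connectedin ?X M3"
    using S(3) M3(2) by (simp add: connectedin_subtopology)
  ultimately have "M3 \<inter> ?X frontier_of W \<noteq> {}"
    by (intro connectedin_Int_frontier_of)
  then show False
    using W(4) M3_J by blast
qed

lemma not_john_domain_if_frontier_of_shared:
  assumes D: "openin (top_of_set S2) D" "D \<noteq> {}"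
    and M2: "openin (top_of_set S2) M2" "connected M2" "M2 \<noteq> {}"
    and M3: "openin (top_of_set S2) M3" "connected M3" "M3 \<noteq> {}"
    and disj: "D \<inter> M2 = {}" "D \<inter> M3 = {}" "M2 \<inter> M3 = {}"
    and fr: "(top_of_set S2) frontier_of M2 = (top_of_set S2) frontier_of D"
      "(top_of_set S2) frontier_of M3 = (top_of_set S2) frontier_of D"
  shows "\<not> john_domain D"
proof
  let ?X = "top_of_set S2"
  let ?K = "?X frontier_of D"
  assume john: "john_domain D"
  obtain C where C: "C \<ge> 1" "chordal_john C D"
    using john_domain_imp_chordal_john[OF john] by blast
  have S: "D \<subseteq> S2" "M2 \<subseteq> S2" "M3 \<subseteq> S2"
    using D(1) M2(1) M3(1) by (auto dest: openin_imp_subset)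
  obtain p q where p: "p \<in> M3" and q: "q \<in> M2"
    using M2(3) M3(3) by blast
  then obtain w1 w2 where w: "w1 \<in> ?K" "w2 \<in> ?K" "w1 \<noteq> w2"
    using frontier_of_S2_two_points[OF D, of q p] S disj by blast
  define \<epsilon> where "\<epsilon> = dist w1 w2 / 2"
  have "0 < \<epsilon>"
    using w(3) by (simp add: \<epsilon>_def)
  have "w1 \<in> ?X frontier_of M2" "w2 \<in> ?X frontier_of M2"
    using w(1,2) fr(1) by simp_all
  then obtain z1 z2 where z1: "z1 \<in> ?K" "dist z1 w1 < \<epsilon>" "accessible_from M2 z1"
    and z2: "z2 \<in> ?K" "dist z2 w2 < \<epsilon>" "accessible_from M2 z2"
    using frontier_of_S2_accessible_near[OF M2(1) _ \<open>0 < \<epsilon>\<close>] unfolding fr(1) by metis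
  have "z1 \<noteq> z2"
    using dist_triangle[of w1 w2 z1] z1(2) z2(2) by (auto simp: \<epsilon>_def dist_commute)
  have "accessible_from D z" if "z \<in> ?K" for z
    using chordal_john_accessible_from[OF C(2,1) S(1)] that D frontier_of_S2_openin[OF D(1)] by blast
  moreover have "path_connected D"
    using john D(1) unfolding john_domain_def by (blast intro: path_connected_openin_S2)
  ultimately obtain \<alpha> where \<alpha>: "arc \<alpha>" "pathstart \<alpha> = z1" "pathfinish \<alpha> = z2"
    "path_image \<alpha> \<subseteq> D \<union> {z1, z2}"
    using accessible_from_arc[of D z1 z2] z1(1) z2(1) \<open>z1 \<noteq> z2\<close> by blast
  obtain \<beta> where \<beta>: "arc \<beta>" "pathstart \<beta> = z2" "pathfinish \<beta> = z1"
    "path_image \<beta> \<subseteq> M2 \<union> {z2, z1}"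
    using accessible_from_arc[OF path_connected_openin_S2[OF M2(1,2)] z2(3) z1(3)] \<open>z1 \<noteq> z2\<close>
    by blast
  have \<beta>_image: "path_image \<beta> \<subseteq> M2 \<union> {z1, z2}"
    using \<beta>(4) by auto
  have "z \<in> S2 - M3" if "z \<in> ?K" for z
    using that fr(2) frontier_of_subset_topspace[of ?X M3] M3(1) by (auto simp: frontier_of_openin)
  then have "\<not> ?K \<subseteq> ?X closure_of M3"
    using Jordan_arcs_frontier_of_not_subset_closure_of[OF D(1) M2(1) M3(1,2) p disj \<alpha> \<beta>(1-3) \<beta>_image] z1(1) z2(1)
    by blast
  moreover have "?K \<subseteq> ?X closure_of M3"
    using fr(2) by (auto simp: frontier_of_def)
  ultimately show False
    by blast
qed

theorem proposition8p3:
  fixes m :: nat and M :: "nat \<Rightarrow> (real^3) set"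
  assumes "m \<ge> 3"
    and "\<And>i. i < m \<Longrightarrow> openin (top_of_set S2) (M i)"
    and "\<And>i. i < m \<Longrightarrow> connected (M i)"
    and "\<And>i. i < m \<Longrightarrow> M i \<noteq> {}"
    and "\<And>i j. i < m \<Longrightarrow> j < m \<Longrightarrow> i \<noteq> j \<Longrightarrow> M i \<inter> M j = {}"
    and "\<And>i. i < m \<Longrightarrow>
           (top_of_set S2) frontier_of (M i) = (\<Inter>j<m. (top_of_set S2) closure_of (M j))"
  shows "\<forall>i<m. \<not> john_domain (M i)"
proof (intro allI impI)
  fix i assume i: "i < m"
  define j where "j = (if i = 0 then 1 else 0 :: nat)"
  define k where "k = (if i \<le> 1 then 2 else 1 :: nat)"
  have jk: "j < m" "k < m" "i \<noteq> j" "i \<noteq> k" "j \<noteq> k"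
    using assms(1) by (auto simp: j_def k_def)
  have same_frontier: "(top_of_set S2) frontier_of (M l) = (top_of_set S2) frontier_of (M i)"
    if "l < m" for l
    using assms(6)[OF that] assms(6)[OF i] by simp
  show "\<not> john_domain (M i)"
  proof (rule not_john_domain_if_frontier_of_shared)
    show "openin (top_of_set S2) (M i)" "openin (top_of_set S2) (M j)" "openin (top_of_set S2) (M k)"
      using assms(2) i jk(1,2) by blast+
    show "connected (M j)" "connected (M k)"
      using assms(3) jk(1,2) by blast+
    show "M i \<noteq> {}" "M j \<noteq> {}" "M k \<noteq> {}"
      using assms(4) i jk(1,2) by blast+
    show "M i \<inter> M j = {}" "M i \<inter> M k = {}" "M j \<inter> M k = {}"
      using assms(5) i jk by blast+
    show "(top_of_set S2) frontier_of (M j) = (top_of_set S2) frontier_of (M i)"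
      "(top_of_set S2) frontier_of (M k) = (top_of_set S2) frontier_of (M i)"
      using same_frontier jk(1,2) by blast+
  qed
qed

end
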